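(* In the model described in the context, with $\tilde k(p)=(1+\theta)p^c$ for $0<c<1$ and $\theta\ge0$, if $\lambda(1-c)\ge\gamma$ then the optimal indemnity is $I^*\equiv0$.
   Context: Let $X\ge0$ be a random variable with $\mathbb{P}(X=0)=1-q$, where $q\in(0,1]$, and with density $q\lambda e^{-\lambda x}$ on $(0,\infty)$, where $\lambda>0$. So $S_X(t)=\mathbb{P}(X>t)=qe^{-\lambda t}$ for $t\ge0$. $\mathcal{I}_c$ is the set of $I:[0,\infty)\to[0,\infty)$ with $0\le I(x)\le x$ and $0\le I(x)-I(y)\le x-y$ for $0\le y\le x$. For $Y\ge0$ with $S_Y(t)=\mathbb{P}(Y>t)$, the premium is $$\pi(Y)=\int_0^\infty\tilde k(S_Y(t))\,dt.$$ Equivalently, $\pi(Y)=(1+\theta)\mathbb{E}Y+\rho_k(Y)$ with $k(p)=\tilde k(p)-(1+\theta)p$. The buyer has wealth $w$ and utility $u$ with $u'(x)=e^{-\gamma x}$, $\gamma>0$. She chooses $I\in\mathcal{I}_c$ to maximize $\mathbb{E}[u(w-X+I(X)-\pi(I(X)))]$; the buyer's distortion is the identity. The optimal indemnity is unique up to $\mathbb{P}$-a.s. equality of $I(X)$. *)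

theory Defs
  imports "HOL-Analysis.Analysis"
begin

text \<open>Expectation of f(X), where P(X=0)=1-q and X has density q lam exp(-lam x) on (0,oo).\<close>
definition expX :: "real \<Rightarrow> real \<Rightarrow> (real \<Rightarrow> real) \<Rightarrow> real" where
  "expX q lam f = (1 - q) * f 0 + (LBINT x:{0<..}. f x * (q * lam * exp (- lam * x)))"

definition survI :: "real \<Rightarrow> real \<Rightarrow> (real \<Rightarrow> real) \<Rightarrow> real \<Rightarrow> real" where
  "survI q lam I t = expX q lam (\<lambda>x. if I x > t then 1 else 0)"

definition premium :: "(real \<Rightarrow> real) \<Rightarrow> real \<Rightarrow> real \<Rightarrow> (real \<Rightarrow> real) \<Rightarrow> real" where
  "premium kt q lam I = (LBINT t:{0..}. kt (survI q lam I t))"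

definition Ic :: "(real \<Rightarrow> real) set" where
  "Ic = {I. (\<forall>x\<ge>0. 0 \<le> I x \<and> I x \<le> x) \<and>
            (\<forall>x y. 0 \<le> y \<and> y \<le> x \<longrightarrow> 0 \<le> I x - I y \<and> I x - I y \<le> x - y)}"

definition EU :: "(real \<Rightarrow> real) \<Rightarrow> (real \<Rightarrow> real) \<Rightarrow> real \<Rightarrow> real \<Rightarrow> real \<Rightarrow> (real \<Rightarrow> real) \<Rightarrow> real" where
  "EU u kt q lam w I = expX q lam (\<lambda>x. u (w - x + I x - premium kt q lam I))"

end

theory Submission
  imports Defs
begin

(*
  Let P be the premium of I(X). The utility is CARA, u(y) = const - exp(-gamma y)/gamma, so the
  tangent line at w - X gives
    E u(w - X + I(X) - P) <= E u(w - X) + exp(-gamma w) (E[exp(gamma X) I(X)] - P E[exp(gamma X)]),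
  and it suffices to show E[exp(gamma X) I(X)] <= P E[exp(gamma X)].
  By Tonelli, E[exp(gamma X) I(X)] is the integral over t >= 0 of E[exp(gamma X); I(X) > t].
  As I is nondecreasing with I(x) <= x, the event {X > 0, I(X) > t} is empty, {X > a} or {X >= a}
  for some a >= t; hence S_I(X)(t) = q exp(-lambda a), while E[exp(gamma X); I(X) > t] equals
  q lambda exp(-L a) / L with L = lambda - gamma >= lambda c. The weighted AM-GM inequality
  q^(1-c) <= (1-c) q + c then bounds the latter by E[exp(gamma X)] (1+theta) S_I(X)(t)^c, and
  integrating over t gives the claim.
*)

lemma nn_integral_exp_atLeast:
  fixes k a :: real
  assumes "0 < k"
  shows "(\<integral>\<^sup>+x. ennreal (indicator {a..} x * exp (- k * x)) \<partial>lborel) = ennreal (exp (- k * a) / k)"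
proof -
  have indicator_eq: "(\<lambda>x. indicator {a..} x * exp (- k * x)) = (\<lambda>x. if x \<in> {a..} then exp (- k * x) else 0)"
    by (auto simp: indicator_def)
  have "((\<lambda>x. indicator {a..} x * exp (- k * x)) has_integral exp (- k * a) / k) UNIV"
    unfolding indicator_eq has_integral_restrict_UNIV using has_integral_exp_minus_to_infinity[OF assms, of a]
    by simp
  then show ?thesis
    by (intro nn_integral_has_integral_lborel) auto
qed

lemma set_integral_exp_atLeast:
  fixes k a :: real
  assumes "0 < k"
  shows "set_integrable lborel {a..} (\<lambda>x. exp (- k * x))"
    and "(LBINT x:{a..}. exp (- k * x)) = exp (- k * a) / k"
proof -
  have "integrable lborel (\<lambda>x. indicator {a..} x * exp (- k * x)) \<and>
        integral\<^sup>L lborel (\<lambda>x. indicator {a..} x * exp (- k * x)) = exp (- k * a) / k"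
    using nn_integral_exp_atLeast[OF assms] assms
    by (subst nn_integral_eq_integrable[symmetric]) auto
  then show "set_integrable lborel {a..} (\<lambda>x. exp (- k * x))"
    and "(LBINT x:{a..}. exp (- k * x)) = exp (- k * a) / k"
    by (simp_all add: set_integrable_def set_lebesgue_integral_def)
qed

lemma set_integral_exp_greaterThan:
  fixes k a :: real
  assumes "0 < k"
  shows "set_integrable lborel {a<..} (\<lambda>x. exp (- k * x))"
    and "(LBINT x:{a<..}. exp (- k * x)) = exp (- k * a) / k"
proof -
  show "set_integrable lborel {a<..} (\<lambda>x. exp (- k * x))"
    by (rule set_integrable_subset[OF set_integral_exp_atLeast(1)[OF assms, of a]]) auto
  have "(LBINT x:{a<..}. exp (- k * x)) = (LBINT x:{a..}. exp (- k * x))"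
    by (rule set_integral_cong_set)
       (auto simp: set_borel_measurable_def intro: eventually_mono[OF AE_lborel_singleton[of a]])
  then show "(LBINT x:{a<..}. exp (- k * x)) = exp (- k * a) / k"
    using set_integral_exp_atLeast(2)[OF assms] by simp
qed

lemma cara_utility_eq:
  fixes u :: "real \<Rightarrow> real" and \<gamma> :: real
  assumes "\<And>x. (u has_real_derivative exp (- \<gamma> * x)) (at x)" and "0 < \<gamma>"
  shows "u y = u 0 + 1 / \<gamma> - exp (- \<gamma> * y) / \<gamma>"
proof -
  define h where "h y = u y + exp (- \<gamma> * y) / \<gamma>" for y
  have "(h has_real_derivative 0) (at x)" for x
  proof -
    have "((\<lambda>y. exp (- \<gamma> * y) / \<gamma>) has_real_derivative (exp (- \<gamma> * x) * (- \<gamma>) / \<gamma>)) (at x)"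
      by (auto intro!: derivative_eq_intros)
    from DERIV_add[OF assms(1) this] show ?thesis
      using assms(2) unfolding h_def by simp
  qed
  then have "h y = h 0" by (intro DERIV_isconst_all) blast
  then show ?thesis unfolding h_def by (simp add: algebra_simps)
qed

lemma cara_utility_le_tangent:
  fixes u :: "real \<Rightarrow> real" and \<gamma> :: real
  assumes "\<And>x. (u has_real_derivative exp (- \<gamma> * x)) (at x)" and "0 < \<gamma>"
  shows "u (y + h) \<le> u y + exp (- \<gamma> * y) * h"
proof -
  have "exp (- \<gamma> * (y + h)) = exp (- \<gamma> * y) * exp (- \<gamma> * h)"
    by (simp add: exp_add[symmetric] algebra_simps)
  then have eq: "u (y + h) = u y + exp (- \<gamma> * y) * ((1 - exp (- \<gamma> * h)) / \<gamma>)"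
    by (simp add: cara_utility_eq[OF assms, of "y + h"] cara_utility_eq[OF assms, of y]
        diff_divide_distrib right_diff_distrib)
  have "(1 - exp (- \<gamma> * h)) / \<gamma> \<le> h"
    using exp_ge_add_one_self[of "- \<gamma> * h"] assms(2) by (simp add: divide_le_eq algebra_simps)
  from mult_left_mono[OF this exp_ge_zero[of "- \<gamma> * y"]] eq show ?thesis by linarith
qed

lemma cara_utility_le_tangent_wealth:
  fixes u :: "real \<Rightarrow> real" and \<gamma> :: real
  assumes "\<And>x. (u has_real_derivative exp (- \<gamma> * x)) (at x)" and "0 < \<gamma>"
  shows "u (w - x + i - p) \<le> u (w - x) + exp (- \<gamma> * w) * (exp (\<gamma> * x) * i + (- p) * exp (\<gamma> * x))"
proof -
  have "exp (- \<gamma> * (w - x)) = exp (- \<gamma> * w) * exp (\<gamma> * x)"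
    by (subst exp_add[symmetric]) (simp add: algebra_simps)
  then have "exp (- \<gamma> * w) * (exp (\<gamma> * x) * i + (- p) * exp (\<gamma> * x)) = exp (- \<gamma> * (w - x)) * (i - p)"
    by (simp add: algebra_simps)
  moreover have "u (w - x + i - p) = u ((w - x) + (i - p))"
    by (simp add: algebra_simps)
  ultimately show ?thesis
    using cara_utility_le_tangent[OF assms, of "w - x" "i - p"] by linarith
qed

lemma cara_utility_abs_le:
  fixes u :: "real \<Rightarrow> real" and \<gamma> :: real
  assumes "\<And>x. (u has_real_derivative exp (- \<gamma> * x)) (at x)" and "0 < \<gamma>"
  shows "\<bar>u y\<bar> \<le> \<bar>u 0 + 1 / \<gamma>\<bar> + exp (- \<gamma> * y) / \<gamma>"
  using assms(2) by (subst cara_utility_eq[OF assms]) (smt (verit) exp_gt_zero divide_pos_pos)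

lemma weighted_tail_le_distorted_survival:
  fixes q lam c \<theta> L a :: real
  assumes q: "0 < q" "q \<le> 1" and lam: "0 < lam" and c: "0 < c" "c < 1" and \<theta>: "0 \<le> \<theta>"
    and L: "lam * c \<le> L" and a: "0 \<le> a"
  shows "q * lam * exp (- L * a) / L \<le> (1 - q + q * lam / L) * ((1 + \<theta>) * (q * exp (- lam * a)) powr c)"
proof -
  have L0: "0 < L" using L lam c by (smt (verit) mult_pos_pos)
  have qc: "0 < q powr c" using q by simp
  have "q powr (1 - c) * 1 powr c \<le> (1 - c) * q + c * 1"
    by (rule Youngs_inequality_0) (use q c in auto)
  then have "q powr c * q powr (1 - c) \<le> q powr c * ((1 - c) * q + c)"
    using qc by (intro mult_left_mono) auto
  moreover have "q powr c * q powr (1 - c) = q"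
    using q by (simp flip: powr_add)
  ultimately have "q \<le> q powr c * ((1 - c) * q + c)"
    by simp
  then have "q * lam \<le> q powr c * (lam * ((1 - c) * q + c))"
    using lam by (simp add: mult_right_mono mult.left_commute)
  also have "\<dots> \<le> q powr c * (L * (1 - q) + q * lam)"
    using qc q mult_right_mono[OF L, of "1 - q"] by (intro mult_left_mono) (auto simp: algebra_simps)
  finally have "q * lam / L \<le> (1 - q + q * lam / L) * q powr c"
    using L0 by (simp add: field_simps)
  moreover have "exp (- L * a) \<le> exp (- lam * a * c)"
    using mult_right_mono[OF L a] by (simp add: algebra_simps)
  ultimately have "q * lam / L * exp (- L * a) \<le> (1 - q + q * lam / L) * q powr c * exp (- lam * a * c)"
    using q lam L0 by (intro mult_mono) auto
  also have "\<dots> \<le> (1 + \<theta>) * ((1 - q + q * lam / L) * q powr c * exp (- lam * a * c))"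
  proof -
    have "0 \<le> (1 - q + q * lam / L) * q powr c * exp (- lam * a * c)"
      using q lam L0 by simp
    from mult_nonneg_nonneg[OF \<theta> this] show ?thesis by (simp add: distrib_right)
  qed
  also have "\<dots> = (1 - q + q * lam / L) * ((1 + \<theta>) * (q * exp (- lam * a)) powr c)"
    using q by (simp add: powr_mult exp_powr_real)
  finally show ?thesis by simp
qed

definition exceedance_set :: "(real \<Rightarrow> real) \<Rightarrow> real \<Rightarrow> real set" where
  "exceedance_set I t = {x. 0 < x \<and> t < I x}"

lemma exceedance_set_cases:
  fixes I :: "real \<Rightarrow> real"
  assumes mono: "mono I" and le: "\<forall>x\<ge>0. I x \<le> x" and t: "0 \<le> t"
  obtains "exceedance_set I t = {}"
    | a where "t \<le> a" "exceedance_set I t = {a<..} \<or> exceedance_set I t = {a..}"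
proof (cases "exceedance_set I t = {}")
  case False
  define A where "A = exceedance_set I t"
  have ne: "A \<noteq> {}" using False unfolding A_def .
  have bdd: "bdd_below A" unfolding A_def exceedance_set_def by (rule bdd_belowI[of _ 0]) auto
  have "t \<le> Inf A"
  proof (rule cInf_greatest[OF ne])
    fix x assume "x \<in> A"
    then have "0 < x" "t < I x" unfolding A_def exceedance_set_def by auto
    moreover have "I x \<le> x" using le \<open>0 < x\<close> by simp
    ultimately show "t \<le> x" by linarith
  qed
  have lower: "A \<subseteq> {Inf A..}" using bdd cInf_lower by auto
  have upper: "{Inf A<..} \<subseteq> A"
  proof
    fix x assume "x \<in> {Inf A<..}"
    then obtain y where "y \<in> A" "y < x"
      using cInf_less_iff[OF ne bdd, of x] by auto
    then show "x \<in> A" using monoD[OF mono, of y x] unfolding A_def exceedance_set_def by auto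
  qed
  have "A = {Inf A<..} \<or> A = {Inf A..}"
  proof (cases "Inf A \<in> A")
    case True
    have "{Inf A..} \<subseteq> A" using True upper by (auto simp: le_less)
    with lower show ?thesis by blast
  next
    case False
    with lower upper show ?thesis by (auto simp: le_less)
  qed
  then show ?thesis using that(2) \<open>t \<le> Inf A\<close> unfolding A_def by blast
qed simp

lemma survI_eq_set_integral:
  fixes I :: "real \<Rightarrow> real"
  assumes "I 0 \<le> t"
  shows "survI q lam I t = (LBINT x:exceedance_set I t. q * lam * exp (- lam * x))"
  using assms unfolding survI_def expX_def set_lebesgue_integral_def exceedance_set_def
  by (auto intro!: Bochner_Integration.integral_cong simp: indicator_def)

lemma survI_monotone_cases:
  fixes I :: "real \<Rightarrow> real"
  assumes mono: "mono I" and le: "\<forall>x\<ge>0. I x \<le> x" and I0: "I 0 = 0"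
    and t: "0 \<le> t" and lam: "0 < lam"
  obtains "exceedance_set I t = {}" "survI q lam I t = 0"
    | a where "t \<le> a" "exceedance_set I t \<subseteq> {a..}" "survI q lam I t = q * exp (- lam * a)"
proof (cases rule: exceedance_set_cases[OF mono le t])
  case 1
  moreover have "survI q lam I t = 0"
    using survI_eq_set_integral[of I t q lam] I0 t 1 by (simp add: set_lebesgue_integral_def)
  ultimately show ?thesis
    by (rule that(1))
next
  case (2 a)
  have integral_eq: "(LBINT x:exceedance_set I t. exp (- lam * x)) = exp (- lam * a) / lam"
    using 2(2) by (elim disjE)
      (simp_all only: set_integral_exp_atLeast(2)[OF lam] set_integral_exp_greaterThan(2)[OF lam])
  have "survI q lam I t = q * lam * (LBINT x:exceedance_set I t. exp (- lam * x))"
    using survI_eq_set_integral[of I t q lam] I0 t by simp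
  then have "survI q lam I t = q * exp (- lam * a)"
    unfolding integral_eq using lam by simp
  moreover have "exceedance_set I t \<subseteq> {a..}"
    using 2(2) by (elim disjE) (simp_all only: Ioi_le_Ico order_refl)
  ultimately show ?thesis
    using that(2)[OF 2(1)] by simp
qed

lemma survI_measurable [measurable]:
  fixes I :: "real \<Rightarrow> real"
  assumes [measurable]: "I \<in> borel_measurable borel"
  shows "survI q lam I \<in> borel_measurable borel"
  unfolding survI_def expX_def set_lebesgue_integral_def by measurable

lemma premium_integrable:
  fixes I :: "real \<Rightarrow> real"
  assumes mono: "mono I" and le: "\<forall>x\<ge>0. I x \<le> x" and I0: "I 0 = 0"
    and q: "0 < q" and lam: "0 < lam" and c: "0 < c" and \<theta>: "0 \<le> \<theta>"
  shows "set_integrable lborel {0..} (\<lambda>t. (1 + \<theta>) * survI q lam I t powr c)"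
proof (rule set_integrable_bound)
  have [measurable]: "I \<in> borel_measurable borel" using mono by (rule borel_measurable_mono)
  show "set_integrable lborel {0..} (\<lambda>t. (1 + \<theta>) * q powr c * exp (- (lam * c) * t))"
    using set_integral_exp_atLeast(1)[of "lam * c" 0] lam c by simp
  show "set_borel_measurable lborel {0..} (\<lambda>t. (1 + \<theta>) * survI q lam I t powr c)"
    unfolding set_borel_measurable_def by measurable
  show "AE t in lborel. t \<in> {0..} \<longrightarrow>
      norm ((1 + \<theta>) * survI q lam I t powr c) \<le> norm ((1 + \<theta>) * q powr c * exp (- (lam * c) * t))"
  proof (intro AE_I2 impI)
    fix t :: real assume "t \<in> {0..}"
    then have t: "0 \<le> t" by simp
    have "survI q lam I t powr c \<le> q powr c * exp (- (lam * c) * t)"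
    proof (cases rule: survI_monotone_cases[OF mono le I0 t lam, of q])
      case (2 a)
      then have "survI q lam I t powr c = q powr c * exp (- lam * a * c)"
        using q by (simp add: powr_mult exp_powr_real)
      also have "\<dots> \<le> q powr c * exp (- (lam * c) * t)"
        using 2 lam c q by (intro mult_left_mono) (auto simp: mult_right_mono)
      finally show ?thesis .
    qed (use q in auto)
    then show "norm ((1 + \<theta>) * survI q lam I t powr c) \<le> norm ((1 + \<theta>) * q powr c * exp (- (lam * c) * t))"
      using \<theta> by (simp add: abs_mult mult_left_mono)
  qed
qed

lemma nn_integral_exceedance_set_le:
  fixes I :: "real \<Rightarrow> real"
  assumes mono: "mono I" and le: "\<forall>x\<ge>0. I x \<le> x" and I0: "I 0 = 0" and t: "0 \<le> t"
    and q: "0 < q" "q \<le> 1" and lam: "0 < lam" and c: "0 < c" "c < 1" and \<theta>: "0 \<le> \<theta>"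
    and L: "lam * c \<le> L"
  shows "(\<integral>\<^sup>+x. ennreal (indicator (exceedance_set I t) x * (q * lam * exp (- L * x))) \<partial>lborel)
    \<le> ennreal ((1 - q + q * lam / L) * ((1 + \<theta>) * survI q lam I t powr c))"
proof (cases rule: survI_monotone_cases[OF mono le I0 t lam, of q])
  case (2 a)
  have L0: "0 < L" using L lam c by (smt (verit) mult_pos_pos)
  have "(\<integral>\<^sup>+x. ennreal (indicator (exceedance_set I t) x * (q * lam * exp (- L * x))) \<partial>lborel)
      \<le> (\<integral>\<^sup>+x. ennreal (q * lam) * ennreal (indicator {a..} x * exp (- L * x)) \<partial>lborel)"
    using 2(2) q lam by (intro nn_integral_mono) (auto simp: indicator_def ennreal_mult[symmetric])
  also have "\<dots> = ennreal (q * lam) * ennreal (exp (- L * a) / L)"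
    by (subst nn_integral_cmult) (measurable, simp only: nn_integral_exp_atLeast[OF L0])
  also have "\<dots> = ennreal (q * lam * exp (- L * a) / L)"
    using q lam L0 by (simp add: ennreal_mult[symmetric])
  also have "\<dots> \<le> ennreal ((1 - q + q * lam / L) * ((1 + \<theta>) * survI q lam I t powr c))"
    using weighted_tail_le_distorted_survival[OF q lam c \<theta> L, of a] 2 t
    by (intro ennreal_leI) simp
  finally show ?thesis .
qed simp

lemma nn_integral_weighted_indemnity_le:
  fixes I :: "real \<Rightarrow> real"
  assumes mono: "mono I" and le: "\<forall>x\<ge>0. I x \<le> x" and I0: "I 0 = 0"
    and q: "0 < q" "q \<le> 1" and lam: "0 < lam" and c: "0 < c" "c < 1" and \<theta>: "0 \<le> \<theta>"
    and L: "lam * c \<le> L"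
  shows "(\<integral>\<^sup>+x. ennreal (indicator {0<..} x * (I x * (q * lam * exp (- L * x)))) \<partial>lborel)
    \<le> (\<integral>\<^sup>+t. ennreal (indicator {0..} t * ((1 - q + q * lam / L) * ((1 + \<theta>) * survI q lam I t powr c))) \<partial>lborel)"
proof -
  have [measurable]: "I \<in> borel_measurable borel" using mono by (rule borel_measurable_mono)
  define F where "F x t = ennreal (if 0 \<le> t \<and> 0 < x \<and> t < I x then q * lam * exp (- L * x) else 0)"
    for x t
  have "(\<integral>\<^sup>+t. F x t \<partial>lborel) = ennreal (indicator {0<..} x * (I x * (q * lam * exp (- L * x))))" for x
  proof (cases "0 < x")
    case True
    then have "0 \<le> I x" using mono I0 by (metis less_imp_le monoD)
    have "(\<integral>\<^sup>+t. F x t \<partial>lborel) = (\<integral>\<^sup>+t. ennreal (q * lam * exp (- L * x)) * indicator {0..<I x} t \<partial>lborel)"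
      by (intro nn_integral_cong) (auto simp: F_def True indicator_def)
    also have "\<dots> = ennreal (q * lam * exp (- L * x)) * ennreal (I x)"
      using \<open>0 \<le> I x\<close> by (subst nn_integral_cmult) auto
    also have "\<dots> = ennreal (indicator {0<..} x * (I x * (q * lam * exp (- L * x))))"
      using True \<open>0 \<le> I x\<close> q lam by (simp add: ennreal_mult[symmetric] mult.commute)
    finally show ?thesis .
  qed (simp add: F_def)
  then have "(\<integral>\<^sup>+x. ennreal (indicator {0<..} x * (I x * (q * lam * exp (- L * x)))) \<partial>lborel)
      = (\<integral>\<^sup>+x. \<integral>\<^sup>+t. F x t \<partial>lborel \<partial>lborel)"
    by simp
  also have "\<dots> = (\<integral>\<^sup>+t. \<integral>\<^sup>+x. F x t \<partial>lborel \<partial>lborel)"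
    by (intro lborel_pair.Fubini') (unfold F_def, measurable)
  also have "\<dots> \<le> (\<integral>\<^sup>+t. ennreal (indicator {0..} t * ((1 - q + q * lam / L) * ((1 + \<theta>) * survI q lam I t powr c))) \<partial>lborel)"
  proof (intro nn_integral_mono)
    fix t :: real
    show "(\<integral>\<^sup>+x. F x t \<partial>lborel)
        \<le> ennreal (indicator {0..} t * ((1 - q + q * lam / L) * ((1 + \<theta>) * survI q lam I t powr c)))"
    proof (cases "0 \<le> t")
      case True
      have "(\<integral>\<^sup>+x. F x t \<partial>lborel)
          = (\<integral>\<^sup>+x. ennreal (indicator (exceedance_set I t) x * (q * lam * exp (- L * x))) \<partial>lborel)"
        by (intro nn_integral_cong) (auto simp: F_def True indicator_def exceedance_set_def)
      with nn_integral_exceedance_set_le[OF mono le I0 True q lam c \<theta> L] True show ?thesis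
        by simp
    qed (simp add: F_def)
  qed
  finally show ?thesis .
qed

lemma set_integral_weighted_indemnity_le:
  fixes I :: "real \<Rightarrow> real"
  assumes mono: "mono I" and le: "\<forall>x\<ge>0. I x \<le> x" and I0: "I 0 = 0"
    and q: "0 < q" "q \<le> 1" and lam: "0 < lam" and c: "0 < c" "c < 1" and \<theta>: "0 \<le> \<theta>"
    and L: "lam * c \<le> L"
  shows "set_integrable lborel {0<..} (\<lambda>x. I x * (q * lam * exp (- L * x)))"
    and "(LBINT x:{0<..}. I x * (q * lam * exp (- L * x)))
      \<le> (1 - q + q * lam / L) * premium (\<lambda>p. (1 + \<theta>) * p powr c) q lam I"
proof -
  have [measurable]: "I \<in> borel_measurable borel" using mono by (rule borel_measurable_mono)
  have L0: "0 < L" using L lam c by (smt (verit) mult_pos_pos)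
  define M where "M = 1 - q + q * lam / L"
  have M: "0 \<le> M" unfolding M_def using q lam L0 by simp
  define f where "f x = indicator {0<..} x * (I x * (q * lam * exp (- L * x)))" for x
  define p where "p t = indicator {0..} t * (M * ((1 + \<theta>) * survI q lam I t powr c))" for t
  have "0 \<le> I x" if "0 \<le> x" for x
    using monoD[OF mono that] I0 by simp
  then have f_nonneg: "0 \<le> f x" for x
    using q lam unfolding f_def by (auto simp: indicator_def)
  have [measurable]: "f \<in> borel_measurable borel"
    unfolding f_def by measurable
  have p_int: "integrable lborel p"
    using premium_integrable[OF mono le I0 q(1) lam c(1) \<theta>] unfolding p_def set_integrable_def
    by (simp add: integrable_mult_right mult.left_commute[of _ M])
  have p: "(\<integral>\<^sup>+t. ennreal (p t) \<partial>lborel) = ennreal (integral\<^sup>L lborel p)"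
    by (rule nn_integral_eq_integral[OF p_int]) (use M \<theta> in \<open>auto simp: p_def\<close>)
  have f_le_p: "(\<integral>\<^sup>+x. ennreal (f x) \<partial>lborel) \<le> ennreal (integral\<^sup>L lborel p)"
    using nn_integral_weighted_indemnity_le[OF mono le I0 q lam c \<theta> L]
    unfolding f_def p_def M_def p[unfolded p_def M_def] .
  have "integrable lborel f"
    using f_le_p f_nonneg by (intro integrableI_nonneg) (auto simp: f_def top_unique intro: le_less_trans)
  then show "set_integrable lborel {0<..} (\<lambda>x. I x * (q * lam * exp (- L * x)))"
    unfolding set_integrable_def f_def by simp
  have "(LBINT x:{0<..}. I x * (q * lam * exp (- L * x))) = integral\<^sup>L lborel f"
    unfolding set_lebesgue_integral_def f_def by simp
  also have "\<dots> = enn2real (\<integral>\<^sup>+x. ennreal (f x) \<partial>lborel)"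
    using f_nonneg by (intro integral_eq_nn_integral) auto
  also have "\<dots> \<le> integral\<^sup>L lborel p"
    using f_le_p M \<theta> by (intro enn2real_leI) (auto simp: p_def intro!: integral_nonneg)
  also have "\<dots> = M * premium (\<lambda>p. (1 + \<theta>) * p powr c) q lam I"
    unfolding p_def premium_def set_lebesgue_integral_def by (simp add: mult.left_commute[of _ M])
  finally show "(LBINT x:{0<..}. I x * (q * lam * exp (- L * x)))
      \<le> (1 - q + q * lam / L) * premium (\<lambda>p. (1 + \<theta>) * p powr c) q lam I"
    unfolding M_def .
qed

definition expX_integrable :: "real \<Rightarrow> real \<Rightarrow> (real \<Rightarrow> real) \<Rightarrow> bool" where
  "expX_integrable q lam f \<longleftrightarrow> set_integrable lborel {0<..} (\<lambda>x. f x * (q * lam * exp (- lam * x)))"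

lemma expX_cong:
  assumes "f 0 = g 0" and "\<And>x. 0 < x \<Longrightarrow> f x = g x"
  shows "expX q lam f = expX q lam g"
proof -
  have "(LBINT x:{0<..}. f x * (q * lam * exp (- lam * x))) = (LBINT x:{0<..}. g x * (q * lam * exp (- lam * x)))"
    unfolding set_lebesgue_integral_def
    by (intro Bochner_Integration.integral_cong) (auto simp: assms(2) indicator_def)
  then show ?thesis unfolding expX_def using assms(1) by simp
qed

lemma expX_mono:
  assumes "expX_integrable q lam f" "expX_integrable q lam g"
    and "f 0 \<le> g 0" and "\<And>x. 0 < x \<Longrightarrow> f x \<le> g x"
    and "0 \<le> q" "q \<le> 1" "0 \<le> lam"
  shows "expX q lam f \<le> expX q lam g"
  unfolding expX_def
proof (intro add_mono mult_left_mono set_integral_mono assms(1,2)[unfolded expX_integrable_def])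
  show "f x * (q * lam * exp (- lam * x)) \<le> g x * (q * lam * exp (- lam * x))" if "x \<in> {0<..}" for x
    using assms(4,5,7) that by (intro mult_right_mono) auto
qed (use assms in auto)

lemma expX_integrable_add_scaled:
  assumes "expX_integrable q lam f" "expX_integrable q lam g"
  shows "expX_integrable q lam (\<lambda>x. f x + a * g x)"
  using assms unfolding expX_integrable_def by (simp add: algebra_simps)

lemma expX_add_scaled:
  assumes "expX_integrable q lam f" "expX_integrable q lam g"
  shows "expX q lam (\<lambda>x. f x + a * g x) = expX q lam f + a * expX q lam g"
proof -
  have "(LBINT x:{0<..}. (f x + a * g x) * (q * lam * exp (- lam * x)))
      = (LBINT x:{0<..}. f x * (q * lam * exp (- lam * x)) + a * (g x * (q * lam * exp (- lam * x))))"
    by (simp add: algebra_simps)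
  also have "\<dots> = (LBINT x:{0<..}. f x * (q * lam * exp (- lam * x)))
      + a * (LBINT x:{0<..}. g x * (q * lam * exp (- lam * x)))"
    using assms unfolding expX_integrable_def by (simp add: set_integral_add)
  finally show ?thesis unfolding expX_def by (simp add: algebra_simps)
qed

lemma expX_exp:
  fixes \<gamma> :: real
  assumes "\<gamma> < lam"
  shows "expX_integrable q lam (\<lambda>x. exp (\<gamma> * x))"
    and "expX q lam (\<lambda>x. exp (\<gamma> * x)) = 1 - q + q * lam / (lam - \<gamma>)"
proof -
  have L: "0 < lam - \<gamma>" using assms by simp
  have eq: "exp (\<gamma> * x) * (q * lam * exp (- lam * x)) = q * lam * exp (- (lam - \<gamma>) * x)" for x
    by (simp add: algebra_simps flip: exp_add)
  show "expX_integrable q lam (\<lambda>x. exp (\<gamma> * x))"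
    unfolding expX_integrable_def eq using set_integral_exp_greaterThan(1)[OF L, of 0] by simp
  have "(LBINT x:{0<..}. exp (\<gamma> * x) * (q * lam * exp (- lam * x))) = q * lam / (lam - \<gamma>)"
    unfolding eq using set_integral_exp_greaterThan(2)[OF L, of 0] by simp
  then show "expX q lam (\<lambda>x. exp (\<gamma> * x)) = 1 - q + q * lam / (lam - \<gamma>)"
    unfolding expX_def by simp
qed

lemma expX_integrable_cara_utility:
  fixes u :: "real \<Rightarrow> real" and y :: "real \<Rightarrow> real"
  assumes u: "\<And>x. (u has_real_derivative exp (- \<gamma> * x)) (at x)" and \<gamma>: "0 < \<gamma>" "\<gamma> < lam"
    and y [measurable]: "y \<in> borel_measurable borel" and y_ge: "\<And>x. 0 < x \<Longrightarrow> b - x \<le> y x"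
    and q: "0 \<le> q"
  shows "expX_integrable q lam (\<lambda>x. u (y x))"
  unfolding expX_integrable_def
proof (rule set_integrable_bound)
  define K where "K = u 0 + 1 / \<gamma>"
  have u_eq: "u z = K - exp (- \<gamma> * z) / \<gamma>" for z
    unfolding K_def by (rule cara_utility_eq[OF u \<gamma>(1)])
  show "set_integrable lborel {0<..} (\<lambda>x. \<bar>K\<bar> * (q * lam * exp (- lam * x))
      + exp (- \<gamma> * b) / \<gamma> * (exp (\<gamma> * x) * (q * lam * exp (- lam * x))))"
    using set_integral_exp_greaterThan(1)[of lam 0] expX_exp(1)[OF \<gamma>(2), of q, unfolded expX_integrable_def] \<gamma>
    by (intro set_integral_add set_integrable_mult_right) simp_all
  show "set_borel_measurable lborel {0<..} (\<lambda>x. u (y x) * (q * lam * exp (- lam * x)))"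
    unfolding set_borel_measurable_def u_eq by measurable
  show "AE x in lborel. x \<in> {0<..} \<longrightarrow> norm (u (y x) * (q * lam * exp (- lam * x)))
      \<le> norm (\<bar>K\<bar> * (q * lam * exp (- lam * x))
          + exp (- \<gamma> * b) / \<gamma> * (exp (\<gamma> * x) * (q * lam * exp (- lam * x))))"
  proof (intro AE_I2 impI)
    fix x :: real assume "x \<in> {0<..}"
    then have "\<gamma> * (b - x) \<le> \<gamma> * y x"
      using y_ge[of x] \<gamma> by (intro mult_left_mono) auto
    then have "exp (- \<gamma> * y x) \<le> exp (- \<gamma> * b) * exp (\<gamma> * x)"
      by (simp add: algebra_simps flip: exp_add)
    then have bound: "\<bar>u (y x)\<bar> \<le> \<bar>K\<bar> + exp (- \<gamma> * b) / \<gamma> * exp (\<gamma> * x)"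
      using cara_utility_abs_le[OF u \<gamma>(1), of "y x"] \<gamma> unfolding K_def
      by (smt (verit) divide_right_mono times_divide_eq_left)
    have g: "0 \<le> q * lam * exp (- lam * x)"
      using q \<gamma> by simp
    have "norm (u (y x) * (q * lam * exp (- lam * x))) = \<bar>u (y x)\<bar> * (q * lam * exp (- lam * x))"
      by (metis abs_mult abs_of_nonneg g real_norm_def)
    also have "\<dots> \<le> (\<bar>K\<bar> + exp (- \<gamma> * b) / \<gamma> * exp (\<gamma> * x)) * (q * lam * exp (- lam * x))"
      by (rule mult_right_mono[OF bound g])
    also have "\<dots> = \<bar>K\<bar> * (q * lam * exp (- lam * x))
        + exp (- \<gamma> * b) / \<gamma> * (exp (\<gamma> * x) * (q * lam * exp (- lam * x)))"
      by (simp add: algebra_simps)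
    also have "\<dots> \<le> norm (\<bar>K\<bar> * (q * lam * exp (- lam * x))
        + exp (- \<gamma> * b) / \<gamma> * (exp (\<gamma> * x) * (q * lam * exp (- lam * x))))"
      unfolding real_norm_def by (rule abs_ge_self)
    finally show "norm (u (y x) * (q * lam * exp (- lam * x)))
        \<le> norm (\<bar>K\<bar> * (q * lam * exp (- lam * x))
          + exp (- \<gamma> * b) / \<gamma> * (exp (\<gamma> * x) * (q * lam * exp (- lam * x))))" .
  qed
qed


lemma expX_exp_indemnity_le:
  fixes I :: "real \<Rightarrow> real"
  assumes mono: "mono I" and le: "\<forall>x\<ge>0. I x \<le> x" and I0: "I 0 = 0"
    and q: "0 < q" "q \<le> 1" and lam: "0 < lam" and c: "0 < c" "c < 1" and \<theta>: "0 \<le> \<theta>"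
    and \<gamma>: "\<gamma> \<le> lam * (1 - c)"
  shows "expX_integrable q lam (\<lambda>x. exp (\<gamma> * x) * I x)"
    and "expX q lam (\<lambda>x. exp (\<gamma> * x) * I x)
      \<le> premium (\<lambda>p. (1 + \<theta>) * p powr c) q lam I * expX q lam (\<lambda>x. exp (\<gamma> * x))"
proof -
  have L: "lam * c \<le> lam - \<gamma>" using \<gamma> by (simp add: algebra_simps)
  then have "\<gamma> < lam" using lam c by (smt (verit) mult_pos_pos)
  have eq: "exp (\<gamma> * x) * I x * (q * lam * exp (- lam * x)) = I x * (q * lam * exp (- (lam - \<gamma>) * x))" for x
    by (simp add: algebra_simps flip: exp_add)
  note bound = set_integral_weighted_indemnity_le[OF mono le I0 q lam c \<theta> L]
  show "expX_integrable q lam (\<lambda>x. exp (\<gamma> * x) * I x)"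
    unfolding expX_integrable_def eq using bound(1) .
  have "expX q lam (\<lambda>x. exp (\<gamma> * x) * I x) = (LBINT x:{0<..}. I x * (q * lam * exp (- (lam - \<gamma>) * x)))"
    unfolding expX_def eq using I0 by simp
  also have "\<dots> \<le> premium (\<lambda>p. (1 + \<theta>) * p powr c) q lam I * expX q lam (\<lambda>x. exp (\<gamma> * x))"
    unfolding expX_exp(2)[OF \<open>\<gamma> < lam\<close>] using bound(2) by (simp add: mult.commute)
  finally show "expX q lam (\<lambda>x. exp (\<gamma> * x) * I x)
      \<le> premium (\<lambda>p. (1 + \<theta>) * p powr c) q lam I * expX q lam (\<lambda>x. exp (\<gamma> * x))" .
qed

lemma premium_zero_indemnity:
  assumes "kt 0 = 0"
  shows "premium kt q lam (\<lambda>_. 0) = 0"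
proof -
  have "kt (survI q lam (\<lambda>_. 0) t) = 0" if "0 \<le> t" for t
    using that assms by (simp add: survI_def expX_def)
  then have "(\<lambda>t. indicator {0..} t *\<^sub>R kt (survI q lam (\<lambda>_. 0) t)) = (\<lambda>_. 0::real)"
    by (auto simp: indicator_def)
  then show ?thesis
    unfolding premium_def set_lebesgue_integral_def by simp
qed

lemma EU_le_EU_zero_indemnity:
  fixes I :: "real \<Rightarrow> real" and u :: "real \<Rightarrow> real"
  assumes mono: "mono I" and le: "\<forall>x\<ge>0. I x \<le> x" and I0: "I 0 = 0"
    and q: "0 < q" "q \<le> 1" and lam: "0 < lam" and c: "0 < c" "c < 1" and \<theta>: "0 \<le> \<theta>"
    and u: "\<And>x. (u has_real_derivative exp (- \<gamma> * x)) (at x)" and \<gamma>: "0 < \<gamma>" "\<gamma> \<le> lam * (1 - c)"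
  shows "EU u (\<lambda>p. (1 + \<theta>) * p powr c) q lam w I \<le> EU u (\<lambda>p. (1 + \<theta>) * p powr c) q lam w (\<lambda>_. 0)"
proof -
  have [measurable]: "I \<in> borel_measurable borel" using mono by (rule borel_measurable_mono)
  have "lam * (1 - c) < lam" using lam c by simp
  with \<gamma> have "\<gamma> < lam" by linarith
  define P where "P = premium (\<lambda>p. (1 + \<theta>) * p powr c) q lam I"
  define h where "h x = exp (\<gamma> * x) * I x + (- P) * exp (\<gamma> * x)" for x
  note indemnity = expX_exp_indemnity_le[OF mono le I0 q lam c \<theta> \<gamma>(2)]
  note exponential = expX_exp[OF \<open>\<gamma> < lam\<close>, of q]
  have I_nonneg: "0 \<le> I x" if "0 \<le> x" for x
    using monoD[OF mono that] I0 by simp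
  have tangent: "u (w - x + I x - P) \<le> u (w - x) + exp (- \<gamma> * w) * h x" for x
    unfolding h_def by (rule cara_utility_le_tangent_wealth[OF u \<gamma>(1)])
  have "expX_integrable q lam (\<lambda>x. u (w - x + I x - P))"
  proof (rule expX_integrable_cara_utility[OF u \<gamma>(1) \<open>\<gamma> < lam\<close>])
    show "w - P - x \<le> w - x + I x - P" if "0 < x" for x
      using I_nonneg[of x] that by simp
  qed (use q in simp_all)
  moreover have "expX_integrable q lam (\<lambda>x. u (w - x))"
    by (rule expX_integrable_cara_utility[OF u \<gamma>(1) \<open>\<gamma> < lam\<close>, where b = w]) (use q in simp_all)
  moreover have "expX_integrable q lam h"
    unfolding h_def using indemnity(1) exponential(1) by (rule expX_integrable_add_scaled)
  ultimately have "EU u (\<lambda>p. (1 + \<theta>) * p powr c) q lam w I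
      \<le> expX q lam (\<lambda>x. u (w - x) + exp (- \<gamma> * w) * h x)"
    unfolding EU_def P_def[symmetric] using q lam tangent tangent[of 0]
    by (intro expX_mono expX_integrable_add_scaled) auto
  also have "\<dots> = expX q lam (\<lambda>x. u (w - x)) + exp (- \<gamma> * w) * expX q lam h"
    by (rule expX_add_scaled) fact+
  also have "expX q lam (\<lambda>x. u (w - x)) = EU u (\<lambda>p. (1 + \<theta>) * p powr c) q lam w (\<lambda>_. 0)"
    using c by (simp add: EU_def premium_zero_indemnity)
  finally have "EU u (\<lambda>p. (1 + \<theta>) * p powr c) q lam w I
      \<le> EU u (\<lambda>p. (1 + \<theta>) * p powr c) q lam w (\<lambda>_. 0) + exp (- \<gamma> * w) * expX q lam h" .
  moreover have "expX q lam h = expX q lam (\<lambda>x. exp (\<gamma> * x) * I x) + (- P) * expX q lam (\<lambda>x. exp (\<gamma> * x))"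
    unfolding h_def by (rule expX_add_scaled[OF indemnity(1) exponential(1)])
  then have "expX q lam h \<le> 0"
    using indemnity(2) unfolding P_def by simp
  ultimately show ?thesis
    by (smt (verit) exp_gt_zero mult_nonneg_nonpos)
qed

lemma Ic_extend_by_zero:
  assumes "I \<in> Ic"
  shows "mono (\<lambda>x. I (max 0 x))" and "\<forall>x\<ge>0. I (max 0 x) \<le> x" and "I 0 = 0"
proof -
  have bounds: "\<And>x. 0 \<le> x \<Longrightarrow> 0 \<le> I x \<and> I x \<le> x"
    and incr: "\<And>x y. 0 \<le> y \<Longrightarrow> y \<le> x \<Longrightarrow> I y \<le> I x"
    using assms unfolding Ic_def by auto
  show "mono (\<lambda>x. I (max 0 x))"
    by (rule monoI) (intro incr, auto)
  show "\<forall>x\<ge>0. I (max 0 x) \<le> x"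
    using bounds by simp
  show "I 0 = 0"
    using bounds[of 0] by simp
qed

lemma EU_cong_nonneg:
  assumes "\<And>x. 0 \<le> x \<Longrightarrow> I x = J x"
  shows "EU u kt q lam w I = EU u kt q lam w J"
proof -
  have "survI q lam I = survI q lam J"
    unfolding survI_def using assms by (auto intro!: expX_cong)
  then have "premium kt q lam I = premium kt q lam J"
    unfolding premium_def by simp
  then show ?thesis
    unfolding EU_def using assms by (auto intro!: expX_cong)
qed

theorem proposition4p1:
  fixes q lam \<theta> c \<gamma> w :: real and u :: "real \<Rightarrow> real"
  assumes "0 < q" and "q \<le> 1" and "0 < lam"
    and "0 < c" and "c < 1" and "0 \<le> \<theta>" and "0 < \<gamma>"
    and "\<And>x. (u has_real_derivative exp (- \<gamma> * x)) (at x)"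
    and "lam * (1 - c) \<ge> \<gamma>"
  shows "(\<lambda>_. 0) \<in> Ic \<and>
         (\<forall>I\<in>Ic. EU u (\<lambda>p. (1 + \<theta>) * p powr c) q lam w I
                  \<le> EU u (\<lambda>p. (1 + \<theta>) * p powr c) q lam w (\<lambda>_. 0))"
proof (intro conjI ballI)
  show "(\<lambda>_. 0) \<in> Ic" unfolding Ic_def by simp
  fix I assume "I \<in> Ic"
  note J = Ic_extend_by_zero[OF this]
  have "EU u (\<lambda>p. (1 + \<theta>) * p powr c) q lam w I
      = EU u (\<lambda>p. (1 + \<theta>) * p powr c) q lam w (\<lambda>x. I (max 0 x))"
    by (rule EU_cong_nonneg) simp
  also have "\<dots> \<le> EU u (\<lambda>p. (1 + \<theta>) * p powr c) q lam w (\<lambda>_. 0)"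
    using J(3) by (intro EU_le_EU_zero_indemnity[OF J(1,2) _ assms(1-6,8,7,9)]) simp
  finally show "EU u (\<lambda>p. (1 + \<theta>) * p powr c) q lam w I
      \<le> EU u (\<lambda>p. (1 + \<theta>) * p powr c) q lam w (\<lambda>_. 0)" .
qed

end
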